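(* Let $(X,\mathcal{A},\mu)$ be a probability space and let $\{E_i\}_{i\in\mathbb{N}}$ be a sequence of sets in $\mathcal{A}$. Suppose there exists $0<c_0<1$ such that the following holds: for every $\delta>0$ and every pair of integers $q_1<q_2$ there exist an infinite set $\mathcal{I}\subset\mathbb{N}$ and $i_0=i_0(q_1,q_2,\delta)$ such that $\inf\{\mu(E_i):i\in\mathcal{I}\}>c_0$ and $$\mu(A\cap E_i)\le(1+\delta)\mu(A)\mu(E_i)\quad\text{for all }i\in\mathcal{I}\text{ with }i\ge i_0,\qquad\text{where }A=\bigcup_{j=q_1}^{q_2}E_j.$$ Then $\mu(E_\infty)=1$. In particular, $\mu(E_\infty)=1$ whenever $\limsup_{i\to\infty}\mu(E_i)>0$ and condition (M1) holds.
   Context: $E_\infty:=\limsup_{i\to\infty}E_i=\bigcap_{t=1}^\infty\bigcup_{i=t}^\infty E_i$. Condition (M1): for every $\delta>0$ and all natural numbers $q_1<q_2$ there exists $i_0=i_0(q_1,q_2,\delta)$ such that for all $i\ge i_0$, $\mu(A\cap E_i)\le(1+\delta)\mu(A)\mu(E_i)$ where $A=\bigcup_{j=q_1}^{q_2}E_j$. *)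

theory Defs
  imports "HOL-Probability.Probability"
begin

definition limsup_set :: "(nat \<Rightarrow> 'a set) \<Rightarrow> 'a set" where
  "limsup_set E = (\<Inter>t. \<Union>i\<in>{t..}. E i)"

end

theory Submission
  imports Defs
begin

text \<open>
  Fix a tail union \<open>F = \<Union>i\<ge>q. E i\<close> and approximate it from inside by the finite unions
  \<open>A = \<Union>j\<in>{q..n}. E j\<close>. Infinitely many \<open>E i\<close> with \<open>i \<ge> q\<close> have measure at least \<open>c\<close> and are almost
  independent of \<open>A\<close>, so \<open>\<mu>(F - A) \<ge> \<mu>(E i - A) \<ge> c (1 - (1 + \<delta>) \<mu>(A))\<close>. Letting \<open>n \<rightarrow> \<infinity>\<close> and
  \<open>\<delta> \<rightarrow> 0\<close> gives \<open>0 \<ge> c (1 - \<mu>(F))\<close>, so every tail union has full measure, and hence so has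
  their intersection \<open>E\<^sub>\<infinity>\<close>.
\<close>

context prob_space
begin

lemma prob_Diff_ge_if_quasi_independent:
  assumes "A \<in> events" "B \<in> events"
    and "prob (A \<inter> B) \<le> (1 + \<delta>) * prob A * prob B"
  shows "prob B * (1 - (1 + \<delta>) * prob A) \<le> prob (B - A)"
proof -
  have "prob (B - A) = prob B - prob (B \<inter> A)"
    using assms(2,1) by (rule finite_measure_Diff')
  also have "B \<inter> A = A \<inter> B" by blast
  finally show ?thesis using assms(3) by (simp add: algebra_simps)
qed

lemma prob_eq_1_if_quasi_independent_subevents:
  assumes "F \<in> events" and A: "\<And>n. A n \<in> events" "\<And>n. A n \<subseteq> F"
    and lim: "(\<lambda>n. prob (A n)) \<longlonglongrightarrow> prob F" and "c > 0"
    and sub: "\<And>\<delta>. \<delta> > 0 \<Longrightarrow> \<forall>\<^sub>F n in sequentially. \<exists>B\<in>events. B \<subseteq> F \<and> c \<le> prob B \<and>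
                prob (A n \<inter> B) \<le> (1 + \<delta>) * prob (A n) * prob B"
  shows "prob F = 1"
proof -
  have "1 - prob F \<le> \<delta>" if "\<delta> > 0" for \<delta>
  proof -
    have "\<forall>\<^sub>F n in sequentially. c * (1 - (1 + \<delta>) * prob (A n)) \<le> prob F - prob (A n)"
      using sub[OF \<open>\<delta> > 0\<close>]
    proof eventually_elim
      case (elim n)
      then obtain B where B: "B \<in> events" "B \<subseteq> F" "c \<le> prob B"
        and indep: "prob (A n \<inter> B) \<le> (1 + \<delta>) * prob (A n) * prob B" by blast
      have "c * (1 - (1 + \<delta>) * prob (A n)) \<le> prob (B - A n)"
      proof (cases "(1 + \<delta>) * prob (A n) \<le> 1")
        case True
        with B(3) have "c * (1 - (1 + \<delta>) * prob (A n)) \<le> prob B * (1 - (1 + \<delta>) * prob (A n))"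
          by (intro mult_right_mono) auto
        also have "\<dots> \<le> prob (B - A n)"
          using A(1) B(1) indep by (rule prob_Diff_ge_if_quasi_independent)
        finally show ?thesis .
      next
        case False
        with \<open>c > 0\<close> have "c * (1 - (1 + \<delta>) * prob (A n)) \<le> 0"
          by (intro mult_nonneg_nonpos) auto
        then show ?thesis by (simp add: order_trans)
      qed
      also have "\<dots> \<le> prob (F - A n)"
        using B(2) \<open>F \<in> events\<close> A(1) by (intro finite_measure_mono) auto
      also have "\<dots> = prob F - prob (A n)"
        using \<open>F \<in> events\<close> A by (intro finite_measure_Diff)
      finally show ?case .
    qed
    moreover have "(\<lambda>n. c * (1 - (1 + \<delta>) * prob (A n))) \<longlonglongrightarrow> c * (1 - (1 + \<delta>) * prob F)"
      by (intro tendsto_intros lim)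
    moreover have "(\<lambda>n. prob F - prob (A n)) \<longlonglongrightarrow> prob F - prob F"
      by (intro tendsto_intros lim)
    ultimately have "c * (1 - (1 + \<delta>) * prob F) \<le> 0"
      by (intro tendsto_le[OF sequentially_bot]) simp_all
    with \<open>c > 0\<close> have "1 - (1 + \<delta>) * prob F \<le> 0"
      by (auto simp: mult_le_0_iff)
    then have "1 \<le> prob F + \<delta> * prob F"
      by (simp add: algebra_simps)
    moreover have "\<delta> * prob F \<le> \<delta>"
      using \<open>\<delta> > 0\<close> by (simp add: mult_left_le)
    ultimately show ?thesis by linarith
  qed
  then have "1 \<le> prob F"
    using field_le_epsilon[of "1 - prob F" 0] by simp
  then show ?thesis by (simp add: measure_ge_1_iff)
qed

lemma prob_limsup_set_eq_1_iff:
  assumes "\<And>i. E i \<in> events"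
  shows "prob (limsup_set E) = 1 \<longleftrightarrow> (\<forall>q. prob (\<Union>i\<in>{q..}. E i) = 1)"
proof -
  have events: "(\<Union>i\<in>{q..}. E i) \<in> events" "limsup_set E \<in> events" for q
    unfolding limsup_set_def using assms by auto
  have "prob (limsup_set E) = 1 \<longleftrightarrow> (AE x in M. \<forall>q. x \<in> (\<Union>i\<in>{q..}. E i))"
    using events(2) by (simp add: prob_eq_1 limsup_set_def)
  also have "\<dots> \<longleftrightarrow> (\<forall>q. prob (\<Union>i\<in>{q..}. E i) = 1)"
    using events(1) by (simp add: AE_all_countable prob_eq_1)
  finally show ?thesis .
qed

lemma prob_limsup_set_eq_1_if_quasi_independent:
  assumes E: "\<And>i. E i \<in> events" and "c > 0"
    and quasi_indep: "\<And>\<delta> q1 q2. \<delta> > 0 \<Longrightarrow> q1 < q2 \<Longrightarrow>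
      \<exists>\<^sub>F i in sequentially. c \<le> prob (E i) \<and>
        prob ((\<Union>j\<in>{q1..q2}. E j) \<inter> E i) \<le> (1 + \<delta>) * prob (\<Union>j\<in>{q1..q2}. E j) * prob (E i)"
  shows "prob (limsup_set E) = 1"
  unfolding prob_limsup_set_eq_1_iff[OF E]
proof
  fix q
  let ?A = "\<lambda>n. \<Union>j\<in>{q..n}. E j"
  have incseq: "incseq ?A"
    by (intro monoI UN_mono) auto
  have union: "(\<Union>n. ?A n) = (\<Union>i\<in>{q..}. E i)"
    by (auto intro!: exI[where P = "\<lambda>n. \<exists>j\<in>{q..n}. _ \<in> E j"] bexI)
  have "(\<lambda>n. prob (?A n)) \<longlonglongrightarrow> prob (\<Union>i\<in>{q..}. E i)"
    unfolding union[symmetric] using E incseq by (intro finite_Lim_measure_incseq) auto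
  then show "prob (\<Union>i\<in>{q..}. E i) = 1"
  proof (rule prob_eq_1_if_quasi_independent_subevents[rotated 3, OF _ \<open>c > 0\<close>])
    fix \<delta> :: real assume "\<delta> > 0"
    show "\<forall>\<^sub>F n in sequentially. \<exists>B\<in>events. B \<subseteq> (\<Union>i\<in>{q..}. E i) \<and> c \<le> prob B \<and>
            prob (?A n \<inter> B) \<le> (1 + \<delta>) * prob (?A n) * prob B"
      unfolding eventually_sequentially
    proof (intro exI allI impI)
      fix n assume "Suc q \<le> n"
      with quasi_indep[OF \<open>\<delta> > 0\<close>, of q n] obtain i where "i \<ge> q" "c \<le> prob (E i)"
        "prob (?A n \<inter> E i) \<le> (1 + \<delta>) * prob (?A n) * prob (E i)"
        by (auto simp: frequently_sequentially)
      with E show "\<exists>B\<in>events. B \<subseteq> (\<Union>i\<in>{q..}. E i) \<and> c \<le> prob B \<and>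
            prob (?A n \<inter> B) \<le> (1 + \<delta>) * prob (?A n) * prob B"
        by (intro bexI[of _ "E i"]) auto
    qed
  qed (use E in auto)
qed

end

lemma frequently_ge_pos_if_limsup_pos:
  fixes f :: "nat \<Rightarrow> real"
  assumes "limsup (\<lambda>i. ereal (f i)) > 0"
  obtains r where "r > 0" "\<exists>\<^sub>F i in sequentially. r \<le> f i"
proof -
  obtain r :: real where "0 < ereal r" "ereal r < limsup (\<lambda>i. ereal (f i))"
    using ereal_dense2[OF assms] by blast
  moreover have "\<exists>\<^sub>F i in sequentially. r \<le> f i"
  proof (rule ccontr)
    assume "\<not> (\<exists>\<^sub>F i in sequentially. r \<le> f i)"
    then have "\<forall>\<^sub>F i in sequentially. ereal (f i) \<le> ereal r"
      by (auto simp: not_frequently elim: eventually_mono)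
    then have "limsup (\<lambda>i. ereal (f i)) \<le> ereal r"
      by (rule Limsup_bounded)
    with \<open>ereal r < limsup (\<lambda>i. ereal (f i))\<close> show False by simp
  qed
  ultimately show ?thesis using that by simp
qed

lemma frequently_ge_if_INF_gt:
  fixes f :: "nat \<Rightarrow> real"
  assumes "infinite I" "c < (INF i\<in>I. f i)" "\<And>i. 0 \<le> f i" "\<forall>i\<in>I. i0 \<le> i \<longrightarrow> P i"
  shows "\<exists>\<^sub>F i in sequentially. c \<le> f i \<and> P i"
proof -
  have "c \<le> f i" if "i \<in> I" for i
  proof -
    have "bdd_below (f ` I)" using assms(3) by (intro bdd_belowI[of _ 0]) auto
    with that have "(INF i\<in>I. f i) \<le> f i" by (intro cINF_lower)
    with assms(2) show ?thesis by linarith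
  qed
  with assms(4) have "\<forall>\<^sub>F i in sequentially. i \<in> I \<longrightarrow> c \<le> f i \<and> P i"
    by (auto intro: eventually_mono[OF eventually_ge_at_top[of i0]])
  moreover have "\<exists>\<^sub>F i in sequentially. i \<in> I"
    using assms(1) by (simp add: frequently_cofinite flip: cofinite_eq_sequentially)
  ultimately show ?thesis by (rule frequently_mp)
qed

theorem theorem4:
  fixes M :: "'a measure" and E :: "nat \<Rightarrow> 'a set"
  assumes "prob_space M"
    and "\<And>i. E i \<in> sets M"
  shows "((\<exists>c0::real. 0 < c0 \<and> c0 < 1 \<and>
            (\<forall>\<delta>>0. \<forall>q1 q2::nat. q1 < q2 \<longrightarrow>
              (\<exists>I::nat set. \<exists>i0::nat. infinite I \<and>
                 (INF i\<in>I. measure M (E i)) > c0 \<and>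
                 (\<forall>i\<in>I. i \<ge> i0 \<longrightarrow>
                    measure M ((\<Union>j\<in>{q1..q2}. E j) \<inter> E i)
                      \<le> (1 + \<delta>) * measure M (\<Union>j\<in>{q1..q2}. E j) * measure M (E i)))))
          \<longrightarrow> measure M (limsup_set E) = 1)
       \<and> ((limsup (\<lambda>i. ereal (measure M (E i))) > 0 \<and>
            (\<forall>\<delta>>0. \<forall>q1 q2::nat. q1 < q2 \<longrightarrow>
              (\<exists>i0::nat. \<forall>i\<ge>i0.
                 measure M ((\<Union>j\<in>{q1..q2}. E j) \<inter> E i)
                   \<le> (1 + \<delta>) * measure M (\<Union>j\<in>{q1..q2}. E j) * measure M (E i))))
          \<longrightarrow> measure M (limsup_set E) = 1)"
proof (intro conjI impI; elim conjE exE)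
  interpret prob_space M by fact
  fix c0 :: real
  assume "0 < c0" and H: "\<forall>\<delta>>0. \<forall>q1 q2. q1 < q2 \<longrightarrow> (\<exists>I i0. infinite I \<and>
    (INF i\<in>I. prob (E i)) > c0 \<and> (\<forall>i\<in>I. i \<ge> i0 \<longrightarrow>
      prob ((\<Union>j\<in>{q1..q2}. E j) \<inter> E i) \<le> (1 + \<delta>) * prob (\<Union>j\<in>{q1..q2}. E j) * prob (E i)))"
  show "prob (limsup_set E) = 1"
  proof (rule prob_limsup_set_eq_1_if_quasi_independent[OF assms(2) \<open>0 < c0\<close>])
    fix \<delta> :: real and q1 q2 :: nat assume "\<delta> > 0" "q1 < q2"
    with H obtain I i0 where "infinite I" "(INF i\<in>I. prob (E i)) > c0" "\<forall>i\<in>I. i \<ge> i0 \<longrightarrow>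
      prob ((\<Union>j\<in>{q1..q2}. E j) \<inter> E i) \<le> (1 + \<delta>) * prob (\<Union>j\<in>{q1..q2}. E j) * prob (E i)"
      by blast
    then show "\<exists>\<^sub>F i in sequentially. c0 \<le> prob (E i) \<and>
      prob ((\<Union>j\<in>{q1..q2}. E j) \<inter> E i) \<le> (1 + \<delta>) * prob (\<Union>j\<in>{q1..q2}. E j) * prob (E i)"
      by (intro frequently_ge_if_INF_gt) auto
  qed
next
  interpret prob_space M by fact
  assume "limsup (\<lambda>i. ereal (prob (E i))) > 0" and H: "\<forall>\<delta>>0. \<forall>q1 q2. q1 < q2 \<longrightarrow> (\<exists>i0. \<forall>i\<ge>i0.
    prob ((\<Union>j\<in>{q1..q2}. E j) \<inter> E i) \<le> (1 + \<delta>) * prob (\<Union>j\<in>{q1..q2}. E j) * prob (E i))"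
  then obtain r where "r > 0" and frequent: "\<exists>\<^sub>F i in sequentially. r \<le> prob (E i)"
    by (elim frequently_ge_pos_if_limsup_pos)
  show "prob (limsup_set E) = 1"
  proof (rule prob_limsup_set_eq_1_if_quasi_independent[OF assms(2) \<open>r > 0\<close>])
    fix \<delta> :: real and q1 q2 :: nat assume "\<delta> > 0" "q1 < q2"
    with H have "\<forall>\<^sub>F i in sequentially.
      prob ((\<Union>j\<in>{q1..q2}. E j) \<inter> E i) \<le> (1 + \<delta>) * prob (\<Union>j\<in>{q1..q2}. E j) * prob (E i)"
      by (simp add: eventually_sequentially)
    with frequent show "\<exists>\<^sub>F i in sequentially. r \<le> prob (E i) \<and>
      prob ((\<Union>j\<in>{q1..q2}. E j) \<inter> E i) \<le> (1 + \<delta>) * prob (\<Union>j\<in>{q1..q2}. E j) * prob (E i)"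
      by (elim frequently_mp[rotated] eventually_mono) auto
  qed
qed

end
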